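(* For every $\mathbb{G}$-stopping time $R$, $$\{R<\tau\}\cap\mathcal{G}_R=\{R<\tau\}\cap(\mathcal{N}\vee\mathcal{F}_R).$$
   Context: Let $(\Omega,\mathcal{A},\mathbb{Q})$ be a probability space with a right-continuous filtration $\mathbb{F}=(\mathcal{F}_t)_{t\ge0}$ such that $\mathcal{F}_0$ contains $\mathcal{N}^{\mathcal{F}_\infty}$, where for a $\sigma$-algebra $\mathcal{T}\subset\mathcal{A}$, $\mathcal{N}^{\mathcal{T}}$ denotes the $\sigma$-algebra generated by all subsets of $\mathcal{T}$-measurable $\mathbb{Q}$-null sets. Let $\tau$ be a random variable with values in $[0,\infty]$, let $\mathcal{N}=\mathcal{N}^{\sigma(\tau)\vee\mathcal{F}_\infty}$, and let $\mathbb{G}=(\mathcal{G}_t)_{t\ge0}$ with $\mathcal{G}_t=\mathcal{N}\vee\bigcap_{s>t}(\mathcal{F}_s\vee\sigma(\tau\wedge s))$. For a random time $R$, $\mathcal{F}_R=\sigma\{X_R\mathbf{1}_{\{R<\infty\}}: X\ \mathbb{F}\text{-optional}\}$. For a set $D\subset\Omega$ and a $\sigma$-algebra $\mathcal{T}$, $D\cap\mathcal{T}=\{D\cap B: B\in\mathcal{T}\}$. *)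

theory Defs
  imports "HOL-Probability.Probability"
begin

definition sjoin :: "'a set \<Rightarrow> 'a set set \<Rightarrow> 'a set set \<Rightarrow> 'a set set" where
  "sjoin \<Omega> S T = sigma_sets \<Omega> (S \<union> T)"

definition sigma_rv :: "'a set \<Rightarrow> ('a \<Rightarrow> 'b::topological_space) \<Rightarrow> 'a set set" where
  "sigma_rv \<Omega> f = sigma_sets \<Omega> {f -` B \<inter> \<Omega> | B. B \<in> sets (borel :: 'b measure)}"

definition nullsigma :: "'a measure \<Rightarrow> 'a set set \<Rightarrow> 'a set set" where
  "nullsigma Q T = sigma_sets (space Q)
     {N. N \<subseteq> space Q \<and> (\<exists>B\<in>T. N \<subseteq> B \<and> B \<in> sets Q \<and> measure Q B = 0)}"

definition Finf :: "'a set \<Rightarrow> (real \<Rightarrow> 'a set set) \<Rightarrow> 'a set set" where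
  "Finf \<Omega> F = sigma_sets \<Omega> (\<Union>t\<in>{0..}. F t)"

definition trace_on :: "'a set \<Rightarrow> 'a set set \<Rightarrow> 'a set set" where
  "trace_on D T = (\<lambda>B. D \<inter> B) ` T"

definition is_filtration :: "'a measure \<Rightarrow> (real \<Rightarrow> 'a set set) \<Rightarrow> bool" where
  "is_filtration Q F \<longleftrightarrow>
     (\<forall>t\<ge>0. sigma_algebra (space Q) (F t) \<and> F t \<subseteq> sets Q) \<and>
     (\<forall>s t. 0 \<le> s \<longrightarrow> s \<le> t \<longrightarrow> F s \<subseteq> F t)"

definition right_continuous_filtration :: "(real \<Rightarrow> 'a set set) \<Rightarrow> bool" where
  "right_continuous_filtration F \<longleftrightarrow> (\<forall>t\<ge>0. F t = (\<Inter>s\<in>{t<..}. F s))"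

(* the progressively enlarged filtration G *)
definition Gfilt :: "'a measure \<Rightarrow> (real \<Rightarrow> 'a set set) \<Rightarrow> ('a \<Rightarrow> ennreal) \<Rightarrow> real \<Rightarrow> 'a set set" where
  "Gfilt Q F \<tau> t = sjoin (space Q)
      (nullsigma Q (sjoin (space Q) (sigma_rv (space Q) \<tau>) (Finf (space Q) F)))
      (\<Inter>s\<in>{t<..}. sjoin (space Q) (F s) (sigma_rv (space Q) (\<lambda>\<omega>. min (\<tau> \<omega>) (ennreal s))))"

definition is_stopping_time :: "'a set \<Rightarrow> (real \<Rightarrow> 'a set set) \<Rightarrow> ('a \<Rightarrow> ennreal) \<Rightarrow> bool" where
  "is_stopping_time \<Omega> H R \<longleftrightarrow> (\<forall>t\<ge>0. {\<omega>\<in>\<Omega>. R \<omega> \<le> ennreal t} \<in> H t)"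

definition cadlag :: "(real \<Rightarrow> real) \<Rightarrow> bool" where
  "cadlag f \<longleftrightarrow> (\<forall>t\<ge>0. (f \<longlongrightarrow> f t) (at_right t)) \<and>
                 (\<forall>t>0. \<exists>l. (f \<longlongrightarrow> l) (at_left t))"

definition adapted :: "'a set \<Rightarrow> (real \<Rightarrow> 'a set set) \<Rightarrow> (real \<Rightarrow> 'a \<Rightarrow> real) \<Rightarrow> bool" where
  "adapted \<Omega> H X \<longleftrightarrow> (\<forall>t\<ge>0. \<forall>B\<in>sets (borel :: real measure). {\<omega>\<in>\<Omega>. X t \<omega> \<in> B} \<in> H t)"

definition optional_sigma :: "'a set \<Rightarrow> (real \<Rightarrow> 'a set set) \<Rightarrow> (real \<times> 'a) set set" where
  "optional_sigma \<Omega> H = sigma_sets ({0..} \<times> \<Omega>)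
     {{(t, \<omega>) \<in> {0..} \<times> \<Omega>. X t \<omega> \<in> B} | X B.
        adapted \<Omega> H X \<and> (\<forall>\<omega>\<in>\<Omega>. cadlag (\<lambda>t. X t \<omega>)) \<and> B \<in> sets (borel :: real measure)}"

definition optional_process :: "'a set \<Rightarrow> (real \<Rightarrow> 'a set set) \<Rightarrow> (real \<Rightarrow> 'a \<Rightarrow> real) \<Rightarrow> bool" where
  "optional_process \<Omega> H Y \<longleftrightarrow>
     (\<forall>B\<in>sets (borel :: real measure). {(t, \<omega>) \<in> {0..} \<times> \<Omega>. Y t \<omega> \<in> B} \<in> optional_sigma \<Omega> H)"

definition sigma_at :: "'a set \<Rightarrow> (real \<Rightarrow> 'a set set) \<Rightarrow> ('a \<Rightarrow> ennreal) \<Rightarrow> 'a set set" where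
  "sigma_at \<Omega> H R = sigma_sets \<Omega>
     {{\<omega>\<in>\<Omega>. (if R \<omega> < \<infinity> then Y (enn2real (R \<omega>)) \<omega> else 0) \<in> B} | Y B.
        optional_process \<Omega> H Y \<and> B \<in> sets (borel :: real measure)}"

end

theory Submission
  imports Defs
begin

(* The argument, developed bottom-up in this file:
   (1) Every G_t-event coincides on {t < tau}, outside a null set of N, with an F_t-event
       (G_F_approx).  On {s < tau} the stopped variable min tau s is constant, and right
       continuity of F passes from the F_s, s > t, to F_t.
   (2) Applying (1) to the events {R \<le> q}, q rational, gives F-events whose debut S is an
       F-stopping time equal to R on {R < tau} off a null set (debut_eq).
   (3) For a G-adapted cadlag X, applying (1) to the events {X_q < r} and using right
       continuity of the paths, the event {X_R < a} agrees before tau (off a null set) with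
       the value at R of an F-optional step process starting at S (adapted_at_R_trace).
   (4) Since traces of generated sigma-algebras are controlled by their generators
       (trace_preimage_sigma_sets), (3) extends to G_R, giving the inclusion of G_R in
       N \<or> F_R before tau; the converse holds because F_R \<subseteq> G_R and the null sets
       of N are G-measurable at every time. *)

lemma sigma_sets_Pow: "S \<subseteq> Pow \<Omega> \<Longrightarrow> sigma_sets \<Omega> S \<subseteq> Pow \<Omega>"
  using sigma_sets_into_sp by blast

lemma sigma_rv_Pow: "sigma_rv \<Omega> f \<subseteq> Pow \<Omega>"
  unfolding sigma_rv_def by (rule sigma_sets_Pow) blast

lemma nullsigma_Pow: "nullsigma Q T \<subseteq> Pow (space Q)"
  unfolding nullsigma_def by (rule sigma_sets_Pow) blast

lemma sigma_at_Pow: "sigma_at \<Omega> H R \<subseteq> Pow \<Omega>"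
  unfolding sigma_at_def by (rule sigma_sets_Pow) blast

lemma sigma_algebra_sjoin:
  "S \<subseteq> Pow \<Omega> \<Longrightarrow> T \<subseteq> Pow \<Omega> \<Longrightarrow> sigma_algebra \<Omega> (sjoin \<Omega> S T)"
  unfolding sjoin_def by (rule sigma_algebra_sigma_sets) blast

lemma trace_on_iff: "D \<inter> A \<in> trace_on D M \<longleftrightarrow> (\<exists>B\<in>M. D \<inter> A = D \<inter> B)"
  unfolding trace_on_def by blast

lemma trace_onI: "B \<in> M \<Longrightarrow> D \<inter> A = D \<inter> B \<Longrightarrow> D \<inter> A \<in> trace_on D M"
  unfolding trace_on_iff by blast

lemma trace_preimage_sigma_sets:
  assumes M: "sigma_algebra \<Omega> M" and D: "D \<subseteq> \<Omega>"
    and gen: "\<And>C. C \<in> S \<Longrightarrow> D \<inter> f -` C \<in> trace_on D M"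
    and C: "C \<in> sigma_sets X S" and fX: "\<And>\<omega>. \<omega> \<in> D \<Longrightarrow> f \<omega> \<in> X"
  shows "D \<inter> f -` C \<in> trace_on D M"
proof -
  interpret M: sigma_algebra \<Omega> M by (rule M)
  show ?thesis using C
  proof (induction rule: sigma_sets.induct)
    case (Basic C)
    then show ?case by (rule gen)
  next
    case Empty
    show ?case unfolding trace_on_iff by blast
  next
    case (Compl C)
    then obtain B where "B \<in> M" "D \<inter> f -` C = D \<inter> B" unfolding trace_on_iff by blast
    then show ?case using D fX unfolding trace_on_iff by (intro bexI[of _ "\<Omega> - B"]) blast+
  next
    case (Union A)
    then obtain B where "\<And>i. B i \<in> M" "\<And>i. D \<inter> f -` A i = D \<inter> B i"
      unfolding trace_on_iff by metis
    then show ?case unfolding trace_on_iff by (intro bexI[of _ "\<Union>i. B i"]) blast+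
  qed
qed

lemma trace_sigma_sets_subset:
  assumes "sigma_algebra \<Omega> M" "D \<subseteq> \<Omega>" "\<And>C. C \<in> S \<Longrightarrow> D \<inter> C \<in> trace_on D M"
  shows "trace_on D (sigma_sets \<Omega> S) \<subseteq> trace_on D M"
proof
  fix Z assume "Z \<in> trace_on D (sigma_sets \<Omega> S)"
  then obtain A where A: "A \<in> sigma_sets \<Omega> S" "Z = D \<inter> A" unfolding trace_on_def by blast
  have "D \<inter> id -` A \<in> trace_on D M"
    using assms(1,2) _ A(1) by (rule trace_preimage_sigma_sets) (use assms in auto)
  then show "Z \<in> trace_on D M" using A(2) by simp
qed

lemma sets_borel_Iio: "sets (borel :: real measure) = sigma_sets UNIV (range lessThan)"
  by (subst borel_Iio) (rule sets_measure_of, simp)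

(* Rational times in [0,\<infinity>), the countable set of times at which G-events are approximated,
   and the null sequence \<delta> M = 1/(M+1) used to approach a time from the right. *)
definition nonneg_rats :: "real set" where
  "nonneg_rats = {q. q \<in> \<rat> \<and> 0 \<le> q}"

definition \<delta> :: "nat \<Rightarrow> real" where
  "\<delta> M = 1 / (real M + 1)"

lemma countable_nonneg_rats: "countable nonneg_rats"
  unfolding nonneg_rats_def by (rule countable_subset[OF _ countable_rat]) auto

lemma \<delta>_pos: "0 < \<delta> M"
  unfolding \<delta>_def by simp

lemma \<delta>_antimono: "M \<le> M' \<Longrightarrow> \<delta> M' \<le> \<delta> M"
  unfolding \<delta>_def by (simp add: divide_left_mono)

lemma \<delta>_less: "0 < e \<Longrightarrow> \<exists>M. \<delta> M < e"
proof -
  assume "0 < e"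
  then obtain M :: nat where "inverse (real (Suc M)) < e" using reals_Archimedean by blast
  then show ?thesis unfolding \<delta>_def by (intro exI[of _ M]) (simp add: inverse_eq_divide add.commute)
qed

lemma ennreal_less_gap:
  assumes "ennreal x < w"
  shows "\<exists>c>x. \<forall>s. s < c \<longrightarrow> ennreal s < w"
proof (cases w)
  case top then show ?thesis by (intro exI[of _ "x+1"]) auto
next
  case (real z)
  have "x < z" using assms real ennreal_leI[of z x] by (auto simp: not_less[symmetric])
  moreover have "0 < z" using assms real by (cases "z \<le> 0") auto
  ultimately show ?thesis using real by (intro exI[of _ z]) (auto intro: ennreal_lessI)
qed

lemma ennreal_less_eventually:
  assumes "ennreal t < x"
  shows "\<exists>M. \<forall>m\<ge>M. ennreal (t + \<delta> m) < x"
proof -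
  obtain c where c: "c > t" "\<And>s. s < c \<Longrightarrow> ennreal s < x" using ennreal_less_gap[OF assms] by blast
  obtain M where "\<delta> M < c - t" using \<delta>_less[of "c - t"] c(1) by auto
  then have "t + \<delta> m < c" if "m \<ge> M" for m using \<delta>_antimono[OF that] by simp
  then show ?thesis using c(2) by blast
qed

lemma cadlag_step: "cadlag (\<lambda>t. if a \<le> ennreal t then (c::real) else 0)"
  unfolding cadlag_def
proof (intro conjI allI impI)
  fix t :: real assume t: "t \<ge> 0"
  let ?f = "\<lambda>t. if a \<le> ennreal t then (c::real) else 0"
  have "\<forall>\<^sub>F s in at_right t. ?f s = ?f t"
  proof (cases "a \<le> ennreal t")
    case True
    show ?thesis
    proof (rule eventually_at_rightI[of t "t+1"])
      fix s assume "s \<in> {t<..<t+1}"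
      then have "ennreal t \<le> ennreal s" by (intro ennreal_leI) auto
      then show "?f s = ?f t" using True by auto
    qed simp
  next
    case False
    then obtain b where b: "b > t" "\<And>s. s < b \<Longrightarrow> ennreal s < a"
      using ennreal_less_gap[of t a] by (auto simp: not_le)
    show ?thesis
    proof (rule eventually_at_rightI[of t b])
      fix s assume "s \<in> {t<..<b}"
      then show "?f s = ?f t" using False b(2)[of s] by auto
    qed (use b in simp)
  qed
  then show "(?f \<longlongrightarrow> ?f t) (at_right t)" by (rule tendsto_eventually)
next
  fix t :: real assume t: "t > 0"
  let ?f = "\<lambda>t. if a \<le> ennreal t then (c::real) else 0"
  show "\<exists>l. (?f \<longlongrightarrow> l) (at_left t)"
  proof (cases "a < ennreal t")
    case True
    then obtain x where x: "0 \<le> x" "a = ennreal x" "x < t"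
      by (cases a) (auto simp: ennreal_less_iff)
    have "\<forall>\<^sub>F s in at_left t. ?f s = c"
    proof (rule eventually_at_leftI[of x])
      fix s assume "s \<in> {x<..<t}"
      then show "?f s = c" unfolding x(2) by (auto intro: ennreal_leI)
    qed fact
    then show ?thesis by (intro exI[of _ c] tendsto_eventually)
  next
    case False
    have "\<forall>\<^sub>F s in at_left t. ?f s = 0"
    proof (rule eventually_at_leftI[of "t - 1"])
      fix s assume "s \<in> {t - 1<..<t}"
      then have "ennreal s < ennreal t" using t by (intro ennreal_lessI) auto
      then show "?f s = 0" using False by auto
    qed simp
    then show ?thesis by (intro exI[of _ 0] tendsto_eventually)
  qed
qed

(* For a right-continuous g, "g x < a" is determined by the values "g q < r" at rational
   times q in a shrinking window (x, x + \<delta> M), provided those values are only observed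
   through some P q r that agrees with them before a bound w > x. *)
lemma right_continuous_less_iff:
  fixes g :: "real \<Rightarrow> real" and P :: "real \<Rightarrow> real \<Rightarrow> bool"
  assumes g: "(g \<longlongrightarrow> g x) (at_right x)" and x: "ennreal x < w"
    and P: "\<And>q r. q \<in> \<rat> \<Longrightarrow> r \<in> \<rat> \<Longrightarrow> x < q \<Longrightarrow> ennreal q < w \<Longrightarrow> P q r \<longleftrightarrow> g q < r"
  shows "g x < a \<longleftrightarrow> (\<exists>r\<in>\<rat>. r < a \<and> (\<exists>M. \<forall>q\<in>\<rat>. x < q \<longrightarrow> q < x + \<delta> M \<longrightarrow> P q r))"
proof -
  obtain c where c: "c > x" "\<And>s. s < c \<Longrightarrow> ennreal s < w"
    using ennreal_less_gap[OF x] by blast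
  show ?thesis
  proof
    assume "g x < a"
    then obtain r where r: "r \<in> \<rat>" "g x < r" "r < a" using Rats_dense_in_real by blast
    have "\<forall>\<^sub>F s in at_right x. g s < r" by (rule order_tendstoD(2)[OF g r(2)])
    then obtain b where b: "b > x" "\<And>s. s > x \<Longrightarrow> s < b \<Longrightarrow> g s < r"
      unfolding eventually_at_right_field by blast
    obtain M where M: "\<delta> M < min b c - x" using \<delta>_less[of "min b c - x"] b c by auto
    have "\<forall>q\<in>\<rat>. x < q \<longrightarrow> q < x + \<delta> M \<longrightarrow> P q r"
      using M P[OF _ r(1)] b(2) c(2) by auto
    then show "\<exists>r\<in>\<rat>. r < a \<and> (\<exists>M. \<forall>q\<in>\<rat>. x < q \<longrightarrow> q < x + \<delta> M \<longrightarrow> P q r)"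
      using r by blast
  next
    assume "\<exists>r\<in>\<rat>. r < a \<and> (\<exists>M. \<forall>q\<in>\<rat>. x < q \<longrightarrow> q < x + \<delta> M \<longrightarrow> P q r)"
    then obtain r M where r: "r \<in> \<rat>" "r < a"
      and M: "\<forall>q\<in>\<rat>. x < q \<longrightarrow> q < x + \<delta> M \<longrightarrow> P q r" by blast
    have "g x \<le> r"
    proof (rule ccontr)
      assume "\<not> g x \<le> r"
      then have "\<forall>\<^sub>F s in at_right x. r < g s" by (intro order_tendstoD(1)[OF g]) simp
      then obtain b where b: "b > x" "\<And>s. s > x \<Longrightarrow> s < b \<Longrightarrow> r < g s"
        unfolding eventually_at_right_field by blast
      have "x < min (min b c) (x + \<delta> M)" using b c \<delta>_pos[of M] by simp
      then obtain q where q: "q \<in> \<rat>" "x < q" "q < min (min b c) (x + \<delta> M)"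
        using Rats_dense_in_real by blast
      then have "g q < r" using M P[OF q(1) r(1) q(2)] c(2) by auto
      moreover have "r < g q" using b q by simp
      ultimately show False by simp
    qed
    then show "g x < a" using r by simp
  qed
qed

definition step_process :: "('a \<Rightarrow> ennreal) \<Rightarrow> 'a set \<Rightarrow> real \<Rightarrow> 'a \<Rightarrow> real" where
  "step_process S W t \<omega> = (if S \<omega> \<le> ennreal t then (if \<omega> \<in> W then 1 else 0) else 0)"

lemma step_process_optional:
  assumes H: "\<And>t. t \<ge> 0 \<Longrightarrow> sigma_algebra \<Omega> (H t)"
    and W: "\<And>t. t \<ge> 0 \<Longrightarrow> {\<omega>\<in>\<Omega>. \<omega> \<in> W \<and> S \<omega> \<le> ennreal t} \<in> H t"
  shows "optional_process \<Omega> H (step_process S W)"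
proof -
  have "adapted \<Omega> H (step_process S W)" unfolding adapted_def
  proof (intro allI impI ballI)
    fix t :: real and B :: "real set" assume t: "t \<ge> 0"
    interpret Ht: sigma_algebra \<Omega> "H t" using H t .
    let ?St = "{\<omega>\<in>\<Omega>. \<omega> \<in> W \<and> S \<omega> \<le> ennreal t}"
    have "{\<omega>\<in>\<Omega>. step_process S W t \<omega> \<in> B}
        = (if 1 \<in> B then ?St else {}) \<union> (if 0 \<in> B then \<Omega> - ?St else {})"
      unfolding step_process_def by auto
    then show "{\<omega>\<in>\<Omega>. step_process S W t \<omega> \<in> B} \<in> H t" using W[OF t] by auto
  qed
  moreover have "\<forall>\<omega>\<in>\<Omega>. cadlag (\<lambda>t. step_process S W t \<omega>)"
    unfolding step_process_def by (intro ballI cadlag_step)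
  ultimately show ?thesis unfolding optional_process_def optional_sigma_def
    by (intro ballI sigma_sets.Basic) blast
qed

lemma step_process_sigma_at:
  assumes "\<And>t. t \<ge> 0 \<Longrightarrow> sigma_algebra \<Omega> (H t)"
    and "\<And>t. t \<ge> 0 \<Longrightarrow> {\<omega>\<in>\<Omega>. \<omega> \<in> W \<and> S \<omega> \<le> ennreal t} \<in> H t"
  shows "{\<omega>\<in>\<Omega>. R \<omega> < \<infinity> \<and> \<omega> \<in> W \<and> S \<omega> \<le> R \<omega>} \<in> sigma_at \<Omega> H R"
proof -
  have "{\<omega>\<in>\<Omega>. R \<omega> < \<infinity> \<and> \<omega> \<in> W \<and> S \<omega> \<le> R \<omega>}
      = {\<omega>\<in>\<Omega>. (if R \<omega> < \<infinity> then step_process S W (enn2real (R \<omega>)) \<omega> else 0) \<in> {1}}"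
    unfolding step_process_def by (auto simp: less_top[symmetric])
  moreover have "optional_process \<Omega> H (step_process S W)" using assms by (rule step_process_optional)
  moreover have "{1::real} \<in> sets borel" by simp
  ultimately show ?thesis unfolding sigma_at_def by (intro sigma_sets.Basic) blast
qed

definition debut :: "(real \<Rightarrow> 'a set) \<Rightarrow> 'a \<Rightarrow> ennreal" where
  "debut C \<omega> = Inf {ennreal q | q. q \<in> nonneg_rats \<and> \<omega> \<in> C q}"

lemma debut_eq:
  assumes R: "R \<omega> < \<tau> \<omega>"
    and C: "\<And>q. q \<in> nonneg_rats \<Longrightarrow> ennreal q < \<tau> \<omega> \<Longrightarrow> R \<omega> \<le> ennreal q \<longleftrightarrow> \<omega> \<in> C q"
  shows "debut C \<omega> = R \<omega>"
proof (rule antisym)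
  show "debut C \<omega> \<le> R \<omega>"
  proof (rule ccontr)
    assume "\<not> debut C \<omega> \<le> R \<omega>"
    moreover obtain x where x: "0 \<le> x" "R \<omega> = ennreal x" using R by (cases "R \<omega>") auto
    ultimately have "ennreal x < min (debut C \<omega>) (\<tau> \<omega>)" using R by simp
    then obtain c where c: "c > x" "\<And>s. s < c \<Longrightarrow> ennreal s < min (debut C \<omega>) (\<tau> \<omega>)"
      using ennreal_less_gap by blast
    obtain q where q: "q \<in> \<rat>" "x < q" "q < c" using Rats_dense_in_real[OF c(1)] by blast
    have q0: "q \<in> nonneg_rats" using q x unfolding nonneg_rats_def by simp
    have qt: "ennreal q < \<tau> \<omega>" "ennreal q < debut C \<omega>" using c(2)[OF q(3)] by auto
    have "R \<omega> \<le> ennreal q" using x q by (simp add: ennreal_leI)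
    then have "\<omega> \<in> C q" using C[OF q0 qt(1)] by blast
    then have "debut C \<omega> \<le> ennreal q" unfolding debut_def using q0 by (intro Inf_lower) blast
    then show False using qt by simp
  qed
next
  show "R \<omega> \<le> debut C \<omega>" unfolding debut_def
  proof (rule Inf_greatest)
    fix y assume "y \<in> {ennreal q | q. q \<in> nonneg_rats \<and> \<omega> \<in> C q}"
    then obtain q where q: "y = ennreal q" "q \<in> nonneg_rats" "\<omega> \<in> C q" by blast
    show "R \<omega> \<le> y"
      using C[OF q(2)] q R by (cases "ennreal q < \<tau> \<omega>") auto
  qed
qed

(* window \<Omega> S C M: the outcomes lying in C q at every rational time q with
   S < q < S + \<delta> M. *)
definition window :: "'a set \<Rightarrow> ('a \<Rightarrow> ennreal) \<Rightarrow> (real \<Rightarrow> 'a set) \<Rightarrow> nat \<Rightarrow> 'a set" where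
  "window \<Omega> S C M = {\<omega>\<in>\<Omega>. \<forall>q\<in>nonneg_rats. S \<omega> < ennreal q \<longrightarrow>
      \<not> (0 \<le> q - \<delta> M \<and> S \<omega> \<le> ennreal (q - \<delta> M)) \<longrightarrow> \<omega> \<in> C q}"

lemma window_mono:
  assumes "M \<le> M'"
  shows "window \<Omega> S C M \<subseteq> window \<Omega> S C M'"
proof -
  have "0 \<le> q - \<delta> M' \<and> S \<omega> \<le> ennreal (q - \<delta> M')"
    if "0 \<le> q - \<delta> M \<and> S \<omega> \<le> ennreal (q - \<delta> M)" for q \<omega>
    using that \<delta>_antimono[OF assms] by (meson diff_left_mono ennreal_leI order_trans)
  then show ?thesis unfolding window_def by blast
qed

lemma window_finite_iff:
  assumes "S \<omega> = ennreal x" "0 \<le> x"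
  shows "\<omega> \<in> window \<Omega> S C M \<longleftrightarrow> \<omega> \<in> \<Omega> \<and> (\<forall>q\<in>\<rat>. x < q \<longrightarrow> q < x + \<delta> M \<longrightarrow> \<omega> \<in> C q)"
proof -
  have "(0 \<le> q \<and> ennreal x < ennreal q \<and> \<not> (0 \<le> q - \<delta> M \<and> ennreal x \<le> ennreal (q - \<delta> M)))
      \<longleftrightarrow> (x < q \<and> q < x + \<delta> M)" for q
    using assms(2) by (auto simp: ennreal_less_iff)
  then show ?thesis unfolding window_def mem_Collect_eq assms(1) nonneg_rats_def by blast
qed

lemma window_union_iff:
  fixes X :: "real \<Rightarrow> 'a \<Rightarrow> real"
  assumes \<omega>: "\<omega> \<in> \<Omega>" and R: "R \<omega> < \<tau> \<omega>" and S: "S \<omega> = R \<omega>"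
    and X: "cadlag (\<lambda>t. X t \<omega>)"
    and C: "\<And>q r. q \<in> nonneg_rats \<Longrightarrow> r \<in> \<rat> \<Longrightarrow> ennreal q < \<tau> \<omega> \<Longrightarrow> \<omega> \<in> C r q \<longleftrightarrow> X q \<omega> < r"
  shows "\<omega> \<in> (\<Union>r\<in>{r\<in>\<rat>. r < a}. \<Union>M. window \<Omega> S (C r) M) \<longleftrightarrow> X (enn2real (R \<omega>)) \<omega> < a"
proof -
  obtain x where x: "0 \<le> x" "R \<omega> = ennreal x" using R by (cases "R \<omega>") auto
  have "\<omega> \<in> (\<Union>r\<in>{r\<in>\<rat>. r < a}. \<Union>M. window \<Omega> S (C r) M)
      \<longleftrightarrow> (\<exists>r\<in>\<rat>. r < a \<and> (\<exists>M. \<forall>q\<in>\<rat>. x < q \<longrightarrow> q < x + \<delta> M \<longrightarrow> \<omega> \<in> C r q))"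
    using window_finite_iff[of S \<omega> x] S x \<omega> by auto
  also have "\<dots> \<longleftrightarrow> X x \<omega> < a"
  proof (rule right_continuous_less_iff[symmetric, where w = "\<tau> \<omega>"])
    show "((\<lambda>s. X s \<omega>) \<longlongrightarrow> X x \<omega>) (at_right x)" using X x(1) unfolding cadlag_def by blast
    show "ennreal x < \<tau> \<omega>" using R x by simp
    fix q r :: real assume "q \<in> \<rat>" "r \<in> \<rat>" "x < q" "ennreal q < \<tau> \<omega>"
    then show "\<omega> \<in> C r q \<longleftrightarrow> X q \<omega> < r" using C x(1) unfolding nonneg_rats_def by auto
  qed
  finally show ?thesis using x by simp
qed

locale filtered_space =
  fixes Q :: "'a measure" and F :: "real \<Rightarrow> 'a set set"
  assumes filt: "is_filtration Q F"
    and rc: "right_continuous_filtration F"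
begin

abbreviation "\<Omega> \<equiv> space Q"

lemma F_sa: "t \<ge> 0 \<Longrightarrow> sigma_algebra \<Omega> (F t)"
  using filt unfolding is_filtration_def by auto

lemma F_mono: "0 \<le> s \<Longrightarrow> s \<le> t \<Longrightarrow> F s \<subseteq> F t"
  using filt unfolding is_filtration_def by auto

lemma F_Pow: "t \<ge> 0 \<Longrightarrow> F t \<subseteq> Pow \<Omega>"
  using filt sets.sets_into_space unfolding is_filtration_def by blast

lemma F_right_continuous:
  assumes t: "t \<ge> 0" and E: "\<And>M. E \<in> F (t + \<delta> M)"
  shows "E \<in> F t"
proof -
  have "E \<in> F s" if "s > t" for s
  proof -
    have "0 < s - t" using that by simp
    then obtain M where "\<delta> M < s - t" using \<delta>_less by blast
    then have "F (t + \<delta> M) \<subseteq> F s" using t \<delta>_pos[of M] by (intro F_mono) auto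
    then show ?thesis using E by blast
  qed
  then show ?thesis using rc t unfolding right_continuous_filtration_def by blast
qed

(* The liminf of events f m \<in> F (t + \<delta> m) depends only on the tail of the sequence, hence
   lies in every F (t + \<delta> K) and thus in F t. *)
lemma liminf_measurable:
  assumes t: "t \<ge> 0" and f: "\<And>m. f m \<in> F (t + \<delta> m)"
  shows "(\<Union>M. \<Inter>m\<in>{M..}. f m) \<in> F t"
proof (rule F_right_continuous[OF t])
  fix K
  interpret FK: sigma_algebra \<Omega> "F (t + \<delta> K)" using F_sa t \<delta>_pos[of K] by simp
  have "(\<Union>M. \<Inter>m\<in>{M..}. f m) = (\<Union>M\<in>{K..}. \<Inter>m\<in>{M..}. f m)"
  proof
    show "(\<Union>M. \<Inter>m\<in>{M..}. f m) \<subseteq> (\<Union>M\<in>{K..}. \<Inter>m\<in>{M..}. f m)"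
    proof
      fix x assume "x \<in> (\<Union>M. \<Inter>m\<in>{M..}. f m)"
      then obtain M where "\<forall>m\<ge>M. x \<in> f m" by auto
      then show "x \<in> (\<Union>M\<in>{K..}. \<Inter>m\<in>{M..}. f m)" by (intro UN_I[of "max M K"]) auto
    qed
  qed auto
  moreover have "f m \<in> F (t + \<delta> K)" if "m \<ge> K" for m
    using f[of m] F_mono[of "t + \<delta> m" "t + \<delta> K"] t \<delta>_pos[of m] \<delta>_antimono[OF that] by auto
  ultimately show "(\<Union>M. \<Inter>m\<in>{M..}. f m) \<in> F (t + \<delta> K)"
    by (auto intro!: FK.countable_UN'' FK.countable_INT')
qed

lemma debut_less_measurable:
  assumes C: "\<And>q. q \<in> nonneg_rats \<Longrightarrow> C q \<in> F q" and s: "s \<ge> 0"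
  shows "{\<omega>\<in>\<Omega>. debut C \<omega> < ennreal s} \<in> F s"
proof -
  interpret Fs: sigma_algebra \<Omega> "F s" using F_sa s .
  have "{\<omega>\<in>\<Omega>. debut C \<omega> < ennreal s} = (\<Union>q\<in>{q\<in>nonneg_rats. q < s}. C q)"
  proof (intro set_eqI iffI)
    fix \<omega> assume "\<omega> \<in> {\<omega>\<in>\<Omega>. debut C \<omega> < ennreal s}"
    then obtain q where "q \<in> nonneg_rats" "\<omega> \<in> C q" "ennreal q < ennreal s"
      unfolding debut_def Inf_less_iff by blast
    then show "\<omega> \<in> (\<Union>q\<in>{q\<in>nonneg_rats. q < s}. C q)"
      using ennreal_less_iff nonneg_rats_def by auto
  next
    fix \<omega> assume "\<omega> \<in> (\<Union>q\<in>{q\<in>nonneg_rats. q < s}. C q)"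
    then obtain q where q: "q \<in> nonneg_rats" "q < s" "\<omega> \<in> C q" by blast
    then have "\<omega> \<in> \<Omega>" using C F_Pow nonneg_rats_def by blast
    moreover have "ennreal q < ennreal s" using q unfolding nonneg_rats_def by (intro ennreal_lessI) auto
    ultimately show "\<omega> \<in> {\<omega>\<in>\<Omega>. debut C \<omega> < ennreal s}"
      unfolding debut_def Inf_less_iff using q by blast
  qed
  moreover have "C q \<in> F s" if "q \<in> nonneg_rats" "q < s" for q
    using C[of q] F_mono[of q s] that nonneg_rats_def by auto
  ultimately show ?thesis
    by (auto intro!: Fs.countable_UN'' intro: countable_subset[OF _ countable_nonneg_rats])
qed

lemma debut_le_measurable:
  assumes C: "\<And>q. q \<in> nonneg_rats \<Longrightarrow> C q \<in> F q" and t: "t \<ge> 0"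
  shows "{\<omega>\<in>\<Omega>. debut C \<omega> \<le> ennreal t} \<in> F t"
proof (rule F_right_continuous[OF t])
  fix K
  interpret FK: sigma_algebra \<Omega> "F (t + \<delta> K)" using F_sa t \<delta>_pos[of K] by simp
  have "{\<omega>\<in>\<Omega>. debut C \<omega> \<le> ennreal t} = (\<Inter>m\<in>{K..}. {\<omega>\<in>\<Omega>. debut C \<omega> < ennreal (t + \<delta> m)})"
  proof (intro set_eqI iffI)
    fix \<omega> assume "\<omega> \<in> {\<omega>\<in>\<Omega>. debut C \<omega> \<le> ennreal t}"
    moreover have "ennreal t < ennreal (t + \<delta> m)" for m
      using t \<delta>_pos[of m] by (intro ennreal_lessI) auto
    ultimately show "\<omega> \<in> (\<Inter>m\<in>{K..}. {\<omega>\<in>\<Omega>. debut C \<omega> < ennreal (t + \<delta> m)})"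
      by (auto intro: le_less_trans)
  next
    fix \<omega> assume w: "\<omega> \<in> (\<Inter>m\<in>{K..}. {\<omega>\<in>\<Omega>. debut C \<omega> < ennreal (t + \<delta> m)})"
    have "debut C \<omega> \<le> ennreal t"
    proof (rule ccontr)
      assume "\<not> debut C \<omega> \<le> ennreal t"
      then have "ennreal t < debut C \<omega>" by simp
      then obtain M where "\<forall>m\<ge>M. ennreal (t + \<delta> m) < debut C \<omega>"
        using ennreal_less_eventually by blast
      then have "ennreal (t + \<delta> (max M K)) < debut C \<omega>" by simp
      moreover have "debut C \<omega> < ennreal (t + \<delta> (max M K))" using w by simp
      ultimately show False by simp
    qed
    then show "\<omega> \<in> {\<omega>\<in>\<Omega>. debut C \<omega> \<le> ennreal t}" using w by auto
  qed
  moreover have "{\<omega>\<in>\<Omega>. debut C \<omega> < ennreal (t + \<delta> m)} \<in> F (t + \<delta> K)" if "m \<ge> K" for m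
    using debut_less_measurable[OF C, of "t + \<delta> m"] F_mono[of "t + \<delta> m" "t + \<delta> K"]
      t \<delta>_pos[of m] \<delta>_antimono[OF that] by auto
  ultimately show "{\<omega>\<in>\<Omega>. debut C \<omega> \<le> ennreal t} \<in> F (t + \<delta> K)"
    by (auto intro!: FK.countable_INT')
qed

lemma window_slice_measurable:
  assumes S_le: "\<And>t. t \<ge> 0 \<Longrightarrow> {\<omega>\<in>\<Omega>. S \<omega> \<le> ennreal t} \<in> F t"
    and S_less: "\<And>t. t \<ge> 0 \<Longrightarrow> {\<omega>\<in>\<Omega>. S \<omega> < ennreal t} \<in> F t"
    and C: "C \<in> F q" and q: "q \<in> nonneg_rats"
  shows "{\<omega>\<in>\<Omega>. S \<omega> < ennreal q \<longrightarrow> \<not> (0 \<le> q - \<delta> M \<and> S \<omega> \<le> ennreal (q - \<delta> M)) \<longrightarrow> \<omega> \<in> C}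
    \<in> F q"
proof -
  have q0: "q \<ge> 0" using q unfolding nonneg_rats_def by simp
  interpret Fq: sigma_algebra \<Omega> "F q" using F_sa q0 .
  define L where "L = (if 0 \<le> q - \<delta> M then {\<omega>\<in>\<Omega>. S \<omega> \<le> ennreal (q - \<delta> M)} else {})"
  have "L \<in> F q"
  proof (cases "0 \<le> q - \<delta> M")
    case True
    then have "F (q - \<delta> M) \<subseteq> F q" using \<delta>_pos[of M] by (intro F_mono) auto
    then show ?thesis unfolding L_def using S_le[OF True] by auto
  qed (simp add: L_def)
  moreover have "{\<omega>\<in>\<Omega>. S \<omega> < ennreal q \<longrightarrow> \<not> (0 \<le> q - \<delta> M \<and> S \<omega> \<le> ennreal (q - \<delta> M)) \<longrightarrow> \<omega> \<in> C}
      = (\<Omega> - {\<omega>\<in>\<Omega>. S \<omega> < ennreal q}) \<union> L \<union> C"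
    unfolding L_def using F_Pow[OF q0] C by auto
  ultimately show ?thesis using S_less[OF q0] C by auto
qed

(* On {S \<le> t}, only rational times q \<le> t + \<delta> M matter, so a window is F_(t + \<delta> M)-measurable
   there; the union over M is then F_t-measurable by right continuity. *)
lemma window_measurable:
  assumes S_le: "\<And>t. t \<ge> 0 \<Longrightarrow> {\<omega>\<in>\<Omega>. S \<omega> \<le> ennreal t} \<in> F t"
    and S_less: "\<And>t. t \<ge> 0 \<Longrightarrow> {\<omega>\<in>\<Omega>. S \<omega> < ennreal t} \<in> F t"
    and C: "\<And>q. q \<in> nonneg_rats \<Longrightarrow> C q \<in> F q" and t: "t \<ge> 0"
  shows "window \<Omega> S C M \<inter> {\<omega>\<in>\<Omega>. S \<omega> \<le> ennreal t} \<in> F (t + \<delta> M)"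
proof -
  have tM: "0 \<le> t + \<delta> M" using t \<delta>_pos[of M] by simp
  interpret FM: sigma_algebra \<Omega> "F (t + \<delta> M)" using F_sa tM .
  define V where "V q = {\<omega>\<in>\<Omega>. S \<omega> < ennreal q \<longrightarrow>
      \<not> (0 \<le> q - \<delta> M \<and> S \<omega> \<le> ennreal (q - \<delta> M)) \<longrightarrow> \<omega> \<in> C q}" for q
  define I where "I = {q\<in>nonneg_rats. q \<le> t + \<delta> M}"
  have "window \<Omega> S C M \<inter> {\<omega>\<in>\<Omega>. S \<omega> \<le> ennreal t} = {\<omega>\<in>\<Omega>. S \<omega> \<le> ennreal t} \<inter> (\<Inter>q\<in>I. V q)"
  proof (intro set_eqI iffI)
    fix \<omega> assume w: "\<omega> \<in> {\<omega>\<in>\<Omega>. S \<omega> \<le> ennreal t} \<inter> (\<Inter>q\<in>I. V q)"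
    have "\<omega> \<in> C q" if q: "q \<in> nonneg_rats" "S \<omega> < ennreal q"
      "\<not> (0 \<le> q - \<delta> M \<and> S \<omega> \<le> ennreal (q - \<delta> M))" for q
    proof (cases "q \<le> t + \<delta> M")
      case True
      then show ?thesis using w q unfolding V_def I_def by blast
    next
      case False
      then have "0 \<le> q - \<delta> M \<and> S \<omega> \<le> ennreal (q - \<delta> M)"
        using w t by (auto intro: order_trans ennreal_leI)
      then show ?thesis using q(3) by blast
    qed
    then show "\<omega> \<in> window \<Omega> S C M \<inter> {\<omega>\<in>\<Omega>. S \<omega> \<le> ennreal t}"
      using w unfolding window_def by blast
  qed (auto simp: window_def V_def I_def)
  moreover have "V q \<in> F (t + \<delta> M)" if "q \<in> I" for q
  proof -
    have q: "q \<in> nonneg_rats" "q \<le> t + \<delta> M" using that unfolding I_def by auto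
    have "V q \<in> F q" unfolding V_def using S_le S_less C[OF q(1)] q(1) by (rule window_slice_measurable)
    then show ?thesis using F_mono[of q "t + \<delta> M"] q unfolding nonneg_rats_def by auto
  qed
  moreover have "countable I" unfolding I_def
    by (rule countable_subset[OF _ countable_nonneg_rats]) blast
  moreover have "0 \<in> I" using tM unfolding I_def nonneg_rats_def by simp
  moreover have "{\<omega>\<in>\<Omega>. S \<omega> \<le> ennreal t} \<in> F (t + \<delta> M)"
    using S_le[OF t] F_mono[of t "t + \<delta> M"] t \<delta>_pos[of M] by auto
  ultimately show ?thesis by (auto intro!: FM.countable_INT')
qed

lemma eventual_window_measurable:
  assumes S_le: "\<And>t. t \<ge> 0 \<Longrightarrow> {\<omega>\<in>\<Omega>. S \<omega> \<le> ennreal t} \<in> F t"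
    and S_less: "\<And>t. t \<ge> 0 \<Longrightarrow> {\<omega>\<in>\<Omega>. S \<omega> < ennreal t} \<in> F t"
    and C: "\<And>q. q \<in> nonneg_rats \<Longrightarrow> C q \<in> F q" and t: "t \<ge> 0"
  shows "(\<Union>M. window \<Omega> S C M) \<inter> {\<omega>\<in>\<Omega>. S \<omega> \<le> ennreal t} \<in> F t"
proof (rule F_right_continuous[OF t])
  fix K
  interpret FK: sigma_algebra \<Omega> "F (t + \<delta> K)" using F_sa t \<delta>_pos[of K] by simp
  have "(\<Union>M. window \<Omega> S C M) \<inter> {\<omega>\<in>\<Omega>. S \<omega> \<le> ennreal t}
      = (\<Union>M\<in>{K..}. window \<Omega> S C M \<inter> {\<omega>\<in>\<Omega>. S \<omega> \<le> ennreal t})"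
  proof (intro set_eqI iffI)
    fix \<omega> assume "\<omega> \<in> (\<Union>M. window \<Omega> S C M) \<inter> {\<omega>\<in>\<Omega>. S \<omega> \<le> ennreal t}"
    then obtain M where "\<omega> \<in> window \<Omega> S C M" "\<omega> \<in> {\<omega>\<in>\<Omega>. S \<omega> \<le> ennreal t}" by blast
    moreover have "window \<Omega> S C M \<subseteq> window \<Omega> S C (max M K)" by (rule window_mono) simp
    ultimately show "\<omega> \<in> (\<Union>M\<in>{K..}. window \<Omega> S C M \<inter> {\<omega>\<in>\<Omega>. S \<omega> \<le> ennreal t})" by auto
  qed blast
  moreover have "window \<Omega> S C M \<inter> {\<omega>\<in>\<Omega>. S \<omega> \<le> ennreal t} \<in> F (t + \<delta> K)" if "M \<ge> K" for M
    using window_measurable[OF S_le S_less C t, of M] F_mono[of "t + \<delta> M" "t + \<delta> K"]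
      t \<delta>_pos[of M] \<delta>_antimono[OF that] by auto
  ultimately show "(\<Union>M. window \<Omega> S C M) \<inter> {\<omega>\<in>\<Omega>. S \<omega> \<le> ennreal t} \<in> F (t + \<delta> K)"
    by (simp only:) (rule FK.countable_UN''; auto)
qed

lemma window_union_measurable:
  assumes S_le: "\<And>t. t \<ge> 0 \<Longrightarrow> {\<omega>\<in>\<Omega>. S \<omega> \<le> ennreal t} \<in> F t"
    and S_less: "\<And>t. t \<ge> 0 \<Longrightarrow> {\<omega>\<in>\<Omega>. S \<omega> < ennreal t} \<in> F t"
    and C: "\<And>r q. r \<in> \<rat> \<Longrightarrow> q \<in> nonneg_rats \<Longrightarrow> C r q \<in> F q" and t: "t \<ge> 0"
  shows "{\<omega>\<in>\<Omega>. \<omega> \<in> (\<Union>r\<in>{r\<in>\<rat>. r < a}. \<Union>M. window \<Omega> S (C r) M) \<and> S \<omega> \<le> ennreal t} \<in> F t"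
proof -
  interpret Ft: sigma_algebra \<Omega> "F t" using F_sa t .
  have "(\<Union>M. window \<Omega> S (C r) M) \<inter> {\<omega>\<in>\<Omega>. S \<omega> \<le> ennreal t} \<in> F t" if "r \<in> \<rat>" for r
    using S_le S_less C[OF that] t by (rule eventual_window_measurable)
  moreover have "{\<omega>\<in>\<Omega>. \<omega> \<in> (\<Union>r\<in>{r\<in>\<rat>. r < a}. \<Union>M. window \<Omega> S (C r) M) \<and> S \<omega> \<le> ennreal t}
      = (\<Union>r\<in>{r\<in>\<rat>. r < a}. (\<Union>M. window \<Omega> S (C r) M) \<inter> {\<omega>\<in>\<Omega>. S \<omega> \<le> ennreal t})"
    by blast
  moreover have "countable {r\<in>\<rat>. r < a}" by (rule countable_subset[OF _ countable_rat]) blast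
  ultimately show ?thesis by (simp only:) (rule Ft.countable_UN''; blast)
qed

end

locale enlargement = filtered_space +
  fixes \<tau> :: "'a \<Rightarrow> ennreal"
  assumes prob: "prob_space Q"
begin

abbreviation G :: "real \<Rightarrow> 'a set set" where
  "G \<equiv> Gfilt Q F \<tau>"

definition Tinf :: "'a set set" where
  "Tinf = sjoin \<Omega> (sigma_rv \<Omega> \<tau>) (Finf \<Omega> F)"

definition Tnull :: "'a set set" where
  "Tnull = {B \<in> Tinf. B \<in> sets Q \<and> measure Q B = 0}"

lemma Finf_Pow: "Finf \<Omega> F \<subseteq> Pow \<Omega>"
  unfolding Finf_def by (rule sigma_sets_Pow) (use F_Pow in blast)

lemma Tinf_sa: "sigma_algebra \<Omega> Tinf"
  unfolding Tinf_def using sigma_rv_Pow Finf_Pow by (rule sigma_algebra_sjoin)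

lemma Tnull_iff: "B \<in> Tnull \<longleftrightarrow> B \<in> Tinf \<and> B \<in> null_sets Q"
proof -
  interpret prob_space Q by (rule prob)
  show ?thesis unfolding Tnull_def null_sets_def by (auto simp: emeasure_eq_measure)
qed

lemma Tnull_UN:
  assumes "countable I" "\<And>i. i \<in> I \<Longrightarrow> B i \<in> Tnull"
  shows "(\<Union>i\<in>I. B i) \<in> Tnull"
proof -
  interpret T: sigma_algebra \<Omega> Tinf by (rule Tinf_sa)
  have "(\<Union>i\<in>I. B i) \<in> Tinf" using assms unfolding Tnull_iff by (intro T.countable_UN'') auto
  moreover have "(\<Union>i\<in>I. B i) \<in> null_sets Q" using assms unfolding Tnull_iff by (intro null_sets_UN') auto
  ultimately show ?thesis unfolding Tnull_iff ..
qed

lemma Tnull_Un: "A \<in> Tnull \<Longrightarrow> B \<in> Tnull \<Longrightarrow> A \<union> B \<in> Tnull"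
  using Tnull_UN[of UNIV "\<lambda>b. if b then A else B"] by (simp add: UNIV_bool Un_commute)

lemma Tnull_subset_nullsigma: "B \<in> Tnull \<Longrightarrow> N \<subseteq> B \<Longrightarrow> N \<in> nullsigma Q Tinf"
  unfolding nullsigma_def Tnull_def using sets.sets_into_space by (intro sigma_sets.Basic) blast

definition Fstop :: "real \<Rightarrow> 'a set set" where
  "Fstop s = sjoin \<Omega> (F s) (sigma_rv \<Omega> (\<lambda>\<omega>. min (\<tau> \<omega>) (ennreal s)))"

lemma G_eq: "G t = sigma_sets \<Omega> (nullsigma Q Tinf \<union> (\<Inter>s\<in>{t<..}. Fstop s))"
  unfolding Gfilt_def Tinf_def Fstop_def by (rule sjoin_def)

lemma G_sa: "sigma_algebra \<Omega> (G t)"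
proof -
  obtain s where s: "s \<in> {t<..}" "s \<ge> 0" by (intro that[of "max (t + 1) 0"]) auto
  have "Fstop s \<subseteq> Pow \<Omega>" unfolding Fstop_def sjoin_def
    using F_Pow[OF s(2)] sigma_rv_Pow by (intro sigma_sets_Pow) blast
  then have "(\<Inter>s\<in>{t<..}. Fstop s) \<subseteq> Pow \<Omega>" using s(1) by blast
  then show ?thesis unfolding G_eq using nullsigma_Pow by (intro sigma_algebra_sigma_sets) blast
qed

lemma F_sub_G: "t \<ge> 0 \<Longrightarrow> F t \<subseteq> G t"
proof
  fix C assume t: "t \<ge> 0" and C: "C \<in> F t"
  have "C \<in> Fstop s" if "s > t" for s
    using F_mono[of t s] t that C unfolding Fstop_def sjoin_def by (intro sigma_sets.Basic) auto
  then show "C \<in> G t" unfolding G_eq by (intro sigma_sets.Basic) blast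
qed

lemma nullsigma_sub_G: "nullsigma Q Tinf \<subseteq> G t"
  unfolding G_eq by blast

(* F_R \<subseteq> G_R, since F-optional processes are G-optional. *)
lemma sigma_at_F_sub_G: "sigma_at \<Omega> F R \<subseteq> sigma_at \<Omega> G R"
proof -
  have "optional_sigma \<Omega> F \<subseteq> optional_sigma \<Omega> G"
    unfolding optional_sigma_def adapted_def by (rule sigma_sets_mono') (use F_sub_G in blast)
  then show ?thesis unfolding sigma_at_def optional_process_def
    by (intro sigma_sets_mono') blast
qed

(* Before \<tau> the stopped variable min \<tau> s is the constant s, so F_s \<or> \<sigma>(min \<tau> s) adds nothing. *)
lemma Fstop_trace:
  assumes s: "s \<ge> 0"
  shows "trace_on {\<omega>\<in>\<Omega>. ennreal s < \<tau> \<omega>} (Fstop s) \<subseteq> trace_on {\<omega>\<in>\<Omega>. ennreal s < \<tau> \<omega>} (F s)"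
proof -
  let ?D = "{\<omega>\<in>\<Omega>. ennreal s < \<tau> \<omega>}"
  interpret Fs: sigma_algebra \<Omega> "F s" using F_sa s .
  have "trace_on ?D (sigma_rv \<Omega> (\<lambda>\<omega>. min (\<tau> \<omega>) (ennreal s))) \<subseteq> trace_on ?D (F s)"
    unfolding sigma_rv_def
  proof (rule trace_sigma_sets_subset[OF Fs.sigma_algebra_axioms])
    fix C assume "C \<in> {(\<lambda>\<omega>. min (\<tau> \<omega>) (ennreal s)) -` B \<inter> \<Omega> | B. B \<in> sets borel}"
    then obtain B where B: "C = (\<lambda>\<omega>. min (\<tau> \<omega>) (ennreal s)) -` B \<inter> \<Omega>" by blast
    have "?D \<inter> C = ?D \<inter> (if ennreal s \<in> B then \<Omega> else {})"
      unfolding B by (auto simp: min_absorb2 less_imp_le)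
    then show "?D \<inter> C \<in> trace_on ?D (F s)" by (rule trace_onI[rotated]) simp
  qed blast
  then have "?D \<inter> C \<in> trace_on ?D (F s)" if "C \<in> F s \<union> sigma_rv \<Omega> (\<lambda>\<omega>. min (\<tau> \<omega>) (ennreal s))" for C
    using that unfolding trace_on_def by blast
  then show ?thesis unfolding Fstop_def sjoin_def
    by (intro trace_sigma_sets_subset[OF Fs.sigma_algebra_axioms]) blast+
qed

(* Passing to the intersection over s > t: the liminf of the approximations at the times
   t + \<delta> m is an F_t-event and agrees with C before \<tau>. *)
lemma Fstop_right_trace:
  assumes t: "t \<ge> 0" and C: "C \<in> (\<Inter>s\<in>{t<..}. Fstop s)"
  shows "\<exists>C'\<in>F t. \<forall>\<omega>\<in>\<Omega>. ennreal t < \<tau> \<omega> \<longrightarrow> (\<omega> \<in> C \<longleftrightarrow> \<omega> \<in> C')"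
proof -
  have "\<exists>C'\<in>F (t + \<delta> m). \<forall>\<omega>\<in>\<Omega>. ennreal (t + \<delta> m) < \<tau> \<omega> \<longrightarrow> (\<omega> \<in> C \<longleftrightarrow> \<omega> \<in> C')" for m
  proof -
    have tm: "0 \<le> t + \<delta> m" "t < t + \<delta> m" using t \<delta>_pos[of m] by auto
    then have "C \<in> Fstop (t + \<delta> m)" using C by blast
    then have "{\<omega>\<in>\<Omega>. ennreal (t + \<delta> m) < \<tau> \<omega>} \<inter> C
        \<in> trace_on {\<omega>\<in>\<Omega>. ennreal (t + \<delta> m) < \<tau> \<omega>} (F (t + \<delta> m))"
      using Fstop_trace[OF tm(1)] unfolding trace_on_def by blast
    then show ?thesis unfolding trace_on_iff by blast
  qed
  then obtain f where f: "\<And>m. f m \<in> F (t + \<delta> m)"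
    "\<And>m. \<forall>\<omega>\<in>\<Omega>. ennreal (t + \<delta> m) < \<tau> \<omega> \<longrightarrow> (\<omega> \<in> C \<longleftrightarrow> \<omega> \<in> f m)"
    by metis
  define C' where "C' = (\<Union>M. \<Inter>m\<in>{M..}. f m)"
  have "C' \<in> F t" unfolding C'_def using t f(1) by (rule liminf_measurable)
  moreover have "\<omega> \<in> C \<longleftrightarrow> \<omega> \<in> C'" if w: "\<omega> \<in> \<Omega>" "ennreal t < \<tau> \<omega>" for \<omega>
  proof -
    obtain M0 where "\<forall>m\<ge>M0. ennreal (t + \<delta> m) < \<tau> \<omega>"
      using ennreal_less_eventually[OF w(2)] by blast
    then have eqv: "m \<ge> M0 \<Longrightarrow> \<omega> \<in> C \<longleftrightarrow> \<omega> \<in> f m" for m using f(2) w(1) by blast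
    show ?thesis
    proof
      assume "\<omega> \<in> C"
      then show "\<omega> \<in> C'" using eqv unfolding C'_def by blast
    next
      assume "\<omega> \<in> C'"
      then obtain M where "\<forall>m\<ge>M. \<omega> \<in> f m" unfolding C'_def by auto
      then show "\<omega> \<in> C" using eqv[of "max M M0"] by auto
    qed
  qed
  ultimately show ?thesis by blast
qed

definition F_approx :: "real \<Rightarrow> 'a set \<Rightarrow> bool" where
  "F_approx t C \<longleftrightarrow>
     (\<exists>C'\<in>F t. \<exists>B\<in>Tnull. \<forall>\<omega>\<in>\<Omega>. ennreal t < \<tau> \<omega> \<longrightarrow> \<omega> \<notin> B \<longrightarrow> (\<omega> \<in> C \<longleftrightarrow> \<omega> \<in> C'))"

lemma F_approx_sigma_sets:
  assumes t: "t \<ge> 0" and S: "\<And>C. C \<in> S \<Longrightarrow> F_approx t C" and C: "C \<in> sigma_sets \<Omega> S"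
  shows "F_approx t C"
proof -
  interpret Ft: sigma_algebra \<Omega> "F t" using F_sa t .
  have "{} \<in> Tnull" using Tnull_UN[of "{}"] by simp
  show ?thesis using C
  proof (induction rule: sigma_sets.induct)
    case (Basic C)
    then show ?case by (rule S)
  next
    case Empty
    show ?case unfolding F_approx_def using \<open>{} \<in> Tnull\<close> by blast
  next
    case (Compl C)
    then obtain C' B where "C' \<in> F t" "B \<in> Tnull"
      "\<forall>\<omega>\<in>\<Omega>. ennreal t < \<tau> \<omega> \<longrightarrow> \<omega> \<notin> B \<longrightarrow> (\<omega> \<in> C \<longleftrightarrow> \<omega> \<in> C')"
      unfolding F_approx_def by blast
    then show ?case unfolding F_approx_def by (intro bexI[of _ "\<Omega> - C'"] bexI[of _ B]) auto
  next
    case (Union A)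
    then obtain C' B where CB: "\<And>i. C' i \<in> F t" "\<And>i. B i \<in> Tnull"
      "\<And>i. \<forall>\<omega>\<in>\<Omega>. ennreal t < \<tau> \<omega> \<longrightarrow> \<omega> \<notin> B i \<longrightarrow> (\<omega> \<in> A i \<longleftrightarrow> \<omega> \<in> C' i)"
      unfolding F_approx_def by metis
    have "(\<Union>i. C' i) \<in> F t" using CB(1) by blast
    moreover have "(\<Union>i. B i) \<in> Tnull" using CB(2) Tnull_UN[of UNIV B] by simp
    ultimately show ?case unfolding F_approx_def
      by (intro bexI[of _ "\<Union>i. C' i"] bexI[of _ "\<Union>i. B i"]) (use CB(3) in auto)
  qed
qed

lemma G_F_approx:
  assumes t: "t \<ge> 0" and C: "C \<in> G t"
  shows "F_approx t C"
proof -
  interpret Ft: sigma_algebra \<Omega> "F t" using F_sa t .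
  have null_approx: "F_approx t N" if "N \<in> nullsigma Q Tinf" for N
    using t _ that[unfolded nullsigma_def]
  proof (rule F_approx_sigma_sets)
    fix N assume "N \<in> {N. N \<subseteq> \<Omega> \<and> (\<exists>B\<in>Tinf. N \<subseteq> B \<and> B \<in> sets Q \<and> measure Q B = 0)}"
    then obtain B where "B \<in> Tnull" "N \<subseteq> B" unfolding Tnull_def by blast
    then show "F_approx t N" unfolding F_approx_def by (intro bexI[of _ "{}"] bexI[of _ B]) auto
  qed
  have "{} \<in> Tnull" using Tnull_UN[of "{}"] by simp
  then have stop_approx: "F_approx t C" if "C \<in> (\<Inter>s\<in>{t<..}. Fstop s)" for C
    using Fstop_right_trace[OF t that] unfolding F_approx_def by blast
  show ?thesis using t _ C[unfolded G_eq] by (rule F_approx_sigma_sets) (use null_approx stop_approx in blast)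
qed

lemma G_F_approx_family:
  assumes I: "countable I" and C: "\<And>i. i \<in> I \<Longrightarrow> t i \<ge> 0 \<and> C i \<in> G (t i)"
  shows "\<exists>C' B. B \<in> Tnull \<and> (\<forall>i\<in>I. C' i \<in> F (t i) \<and>
           (\<forall>\<omega>\<in>\<Omega>. ennreal (t i) < \<tau> \<omega> \<longrightarrow> \<omega> \<notin> B \<longrightarrow> (\<omega> \<in> C i \<longleftrightarrow> \<omega> \<in> C' i)))"
proof -
  have "\<forall>i\<in>I. \<exists>C' B. C' \<in> F (t i) \<and> B \<in> Tnull \<and>
      (\<forall>\<omega>\<in>\<Omega>. ennreal (t i) < \<tau> \<omega> \<longrightarrow> \<omega> \<notin> B \<longrightarrow> (\<omega> \<in> C i \<longleftrightarrow> \<omega> \<in> C'))"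
    using G_F_approx C unfolding F_approx_def by blast
  then obtain C' B where CB: "\<And>i. i \<in> I \<Longrightarrow> C' i \<in> F (t i) \<and> B i \<in> Tnull \<and>
      (\<forall>\<omega>\<in>\<Omega>. ennreal (t i) < \<tau> \<omega> \<longrightarrow> \<omega> \<notin> B i \<longrightarrow> (\<omega> \<in> C i \<longleftrightarrow> \<omega> \<in> C' i))"
    by metis
  then have "(\<Union>i\<in>I. B i) \<in> Tnull" using I by (intro Tnull_UN) auto
  with CB show ?thesis by (intro exI[of _ C'] exI[of _ "\<Union>i\<in>I. B i"]) blast
qed

lemma adapted_approx:
  fixes X :: "real \<Rightarrow> 'a \<Rightarrow> real"
  assumes adapted: "adapted \<Omega> G X"
  obtains CX BX where "BX \<in> Tnull" "\<And>r q. r \<in> \<rat> \<Longrightarrow> q \<in> nonneg_rats \<Longrightarrow> CX r q \<in> F q"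
    "\<And>r q \<omega>. r \<in> \<rat> \<Longrightarrow> q \<in> nonneg_rats \<Longrightarrow> \<omega> \<in> \<Omega> \<Longrightarrow> ennreal q < \<tau> \<omega> \<Longrightarrow> \<omega> \<notin> BX \<Longrightarrow>
       \<omega> \<in> CX r q \<longleftrightarrow> X q \<omega> < r"
proof -
  have XG: "{\<omega>\<in>\<Omega>. X q \<omega> < r} \<in> G q" if "q \<in> nonneg_rats" for q r
  proof -
    have "{\<omega>\<in>\<Omega>. X q \<omega> \<in> {..<r}} \<in> G q"
      using adapted that lessThan_borel[of r] unfolding adapted_def nonneg_rats_def by blast
    then show ?thesis by simp
  qed
  have "\<exists>CX BX. BX \<in> Tnull \<and> (\<forall>p\<in>\<rat> \<times> nonneg_rats. CX p \<in> F (snd p) \<and>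
      (\<forall>\<omega>\<in>\<Omega>. ennreal (snd p) < \<tau> \<omega> \<longrightarrow> \<omega> \<notin> BX \<longrightarrow>
        (\<omega> \<in> {\<omega>\<in>\<Omega>. X (snd p) \<omega> < fst p} \<longleftrightarrow> \<omega> \<in> CX p)))"
  proof (rule G_F_approx_family)
    show "countable (\<rat> \<times> nonneg_rats)" using countable_nonneg_rats countable_rat by blast
  qed (use XG in \<open>auto simp: nonneg_rats_def\<close>)
  then obtain CX BX where "BX \<in> Tnull" "\<forall>p\<in>\<rat> \<times> nonneg_rats. CX p \<in> F (snd p) \<and>
      (\<forall>\<omega>\<in>\<Omega>. ennreal (snd p) < \<tau> \<omega> \<longrightarrow> \<omega> \<notin> BX \<longrightarrow>
        (\<omega> \<in> {\<omega>\<in>\<Omega>. X (snd p) \<omega> < fst p} \<longleftrightarrow> \<omega> \<in> CX p))"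
    by blast
  then show ?thesis using that[of BX "\<lambda>r q. CX (r, q)"] by auto
qed

end

locale enlargement_stopping = enlargement +
  fixes R :: "'a \<Rightarrow> ennreal"
  assumes stopping: "is_stopping_time (space Q) (Gfilt Q F \<tau>) R"
begin

definition D :: "'a set" where
  "D = {\<omega>\<in>\<Omega>. R \<omega> < \<tau> \<omega>}"

definition NF_R :: "'a set set" where
  "NF_R = sjoin \<Omega> (nullsigma Q Tinf) (sigma_at \<Omega> F R)"

lemma D_sub: "D \<subseteq> \<Omega>"
  unfolding D_def by blast

lemma D_finite: "\<omega> \<in> D \<Longrightarrow> R \<omega> < \<infinity>"
  unfolding D_def by (auto intro: less_le_trans)

lemma NF_R_sa: "sigma_algebra \<Omega> NF_R"
  unfolding NF_R_def using nullsigma_Pow sigma_at_Pow by (rule sigma_algebra_sjoin)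

lemma trace_NF_R_null_modification:
  assumes A: "A \<in> NF_R" and B: "B \<in> Tnull" and E: "E \<subseteq> \<Omega>"
    and eq: "\<And>\<omega>. \<omega> \<in> D \<Longrightarrow> \<omega> \<notin> B \<Longrightarrow> \<omega> \<in> A \<longleftrightarrow> \<omega> \<in> E"
  shows "D \<inter> E \<in> trace_on D NF_R"
proof -
  interpret NF: sigma_algebra \<Omega> NF_R by (rule NF_R_sa)
  have "B \<inter> \<Omega> \<in> nullsigma Q Tinf" "E \<inter> B \<in> nullsigma Q Tinf"
    using Tnull_subset_nullsigma[OF B] by auto
  then have "B \<inter> \<Omega> \<in> NF_R" "E \<inter> B \<in> NF_R"
    unfolding NF_R_def sjoin_def by (auto intro: sigma_sets.Basic)
  then have "(A - (B \<inter> \<Omega>)) \<union> (E \<inter> B) \<in> NF_R" using A by blast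
  moreover have "D \<inter> E = D \<inter> ((A - (B \<inter> \<Omega>)) \<union> (E \<inter> B))"
  proof (intro set_eqI iffI)
    fix \<omega> assume "\<omega> \<in> D \<inter> E"
    then show "\<omega> \<in> D \<inter> ((A - (B \<inter> \<Omega>)) \<union> (E \<inter> B))" using eq[of \<omega>] by blast
  next
    fix \<omega> assume "\<omega> \<in> D \<inter> ((A - (B \<inter> \<Omega>)) \<union> (E \<inter> B))"
    then show "\<omega> \<in> D \<inter> E" using eq[of \<omega>] D_sub by blast
  qed
  ultimately show ?thesis by (rule trace_onI)
qed

lemma stopping_time_approx:
  obtains BR CR where "BR \<in> Tnull" "\<And>q. q \<in> nonneg_rats \<Longrightarrow> CR q \<in> F q"
    "\<And>q \<omega>. q \<in> nonneg_rats \<Longrightarrow> \<omega> \<in> \<Omega> \<Longrightarrow> ennreal q < \<tau> \<omega> \<Longrightarrow> \<omega> \<notin> BR \<Longrightarrow>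
       R \<omega> \<le> ennreal q \<longleftrightarrow> \<omega> \<in> CR q"
proof -
  have RG: "{\<omega>\<in>\<Omega>. R \<omega> \<le> ennreal q} \<in> G q" if "q \<in> nonneg_rats" for q
    using stopping that unfolding is_stopping_time_def nonneg_rats_def by auto
  have "\<exists>CR BR. BR \<in> Tnull \<and> (\<forall>q\<in>nonneg_rats. CR q \<in> F q \<and>
      (\<forall>\<omega>\<in>\<Omega>. ennreal q < \<tau> \<omega> \<longrightarrow> \<omega> \<notin> BR \<longrightarrow> (\<omega> \<in> {\<omega>\<in>\<Omega>. R \<omega> \<le> ennreal q} \<longleftrightarrow> \<omega> \<in> CR q)))"
    by (rule G_F_approx_family[OF countable_nonneg_rats, of "\<lambda>q. q" "\<lambda>q. {\<omega>\<in>\<Omega>. R \<omega> \<le> ennreal q}"])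
      (use RG in \<open>auto simp: nonneg_rats_def\<close>)
  then show ?thesis using that by auto
qed

(* With S the debut of the approximations of {R \<le> q}, and W the
   event that the approximations of {X_q < r} hold just after S for some rational r < a,
   the value at R of the F-optional step process 1_W 1_{S \<le> t} does the job. *)
lemma adapted_at_R_trace:
  fixes X :: "real \<Rightarrow> 'a \<Rightarrow> real"
  assumes adapted: "adapted \<Omega> G X" and cadlag: "\<forall>\<omega>\<in>\<Omega>. cadlag (\<lambda>t. X t \<omega>)"
  shows "D \<inter> (\<lambda>\<omega>. X (enn2real (R \<omega>)) \<omega>) -` {..<a} \<in> trace_on D NF_R"
proof -
  obtain BR CR where BR: "BR \<in> Tnull" and CR: "\<And>q. q \<in> nonneg_rats \<Longrightarrow> CR q \<in> F q"
    and CR_eq: "\<And>q \<omega>. q \<in> nonneg_rats \<Longrightarrow> \<omega> \<in> \<Omega> \<Longrightarrow> ennreal q < \<tau> \<omega> \<Longrightarrow> \<omega> \<notin> BR \<Longrightarrow>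
        R \<omega> \<le> ennreal q \<longleftrightarrow> \<omega> \<in> CR q"
    using stopping_time_approx by blast
  obtain CX BX where BX: "BX \<in> Tnull"
    and CX: "\<And>r q. r \<in> \<rat> \<Longrightarrow> q \<in> nonneg_rats \<Longrightarrow> CX r q \<in> F q"
    and CX_eq: "\<And>r q \<omega>. r \<in> \<rat> \<Longrightarrow> q \<in> nonneg_rats \<Longrightarrow> \<omega> \<in> \<Omega> \<Longrightarrow> ennreal q < \<tau> \<omega> \<Longrightarrow>
        \<omega> \<notin> BX \<Longrightarrow> \<omega> \<in> CX r q \<longleftrightarrow> X q \<omega> < r"
    using adapted_approx[OF adapted] by metis
  define S where "S = debut CR"
  define W where "W = (\<Union>r\<in>{r\<in>\<rat>. r < a}. \<Union>M. window \<Omega> S (CX r) M)"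
  have "{\<omega>\<in>\<Omega>. \<omega> \<in> W \<and> S \<omega> \<le> ennreal t} \<in> F t" if "t \<ge> 0" for t
    unfolding W_def S_def using debut_le_measurable[OF CR] debut_less_measurable[OF CR] CX that
    by (rule window_union_measurable)
  then have "{\<omega>\<in>\<Omega>. R \<omega> < \<infinity> \<and> \<omega> \<in> W \<and> S \<omega> \<le> R \<omega>} \<in> sigma_at \<Omega> F R"
    by (intro step_process_sigma_at F_sa)
  then have A: "{\<omega>\<in>\<Omega>. R \<omega> < \<infinity> \<and> \<omega> \<in> W \<and> S \<omega> \<le> R \<omega>} \<in> NF_R"
    unfolding NF_R_def sjoin_def by blast
  have "\<omega> \<in> {\<omega>\<in>\<Omega>. R \<omega> < \<infinity> \<and> \<omega> \<in> W \<and> S \<omega> \<le> R \<omega>} \<longleftrightarrow>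
      \<omega> \<in> \<Omega> \<inter> (\<lambda>\<omega>. X (enn2real (R \<omega>)) \<omega>) -` {..<a}"
    if \<omega>: "\<omega> \<in> D" "\<omega> \<notin> BR \<union> BX" for \<omega>
  proof -
    have \<omega>\<Omega>: "\<omega> \<in> \<Omega>" and R\<tau>: "R \<omega> < \<tau> \<omega>" using \<omega>(1) unfolding D_def by auto
    have S\<omega>: "S \<omega> = R \<omega>" unfolding S_def using R\<tau> by (rule debut_eq) (use CR_eq \<omega>\<Omega> \<omega>(2) in blast)
    have "\<omega> \<in> W \<longleftrightarrow> X (enn2real (R \<omega>)) \<omega> < a" unfolding W_def
    proof (rule window_union_iff)
      show "cadlag (\<lambda>t. X t \<omega>)" using cadlag \<omega>\<Omega> by blast
    qed (use \<omega>\<Omega> R\<tau> S\<omega> CX_eq \<omega>(2) in auto)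
    then show ?thesis using \<omega>\<Omega> S\<omega> D_finite[OF \<omega>(1)] by auto
  qed
  then have "D \<inter> (\<Omega> \<inter> (\<lambda>\<omega>. X (enn2real (R \<omega>)) \<omega>) -` {..<a}) \<in> trace_on D NF_R"
    using Tnull_Un[OF BR BX] by (intro trace_NF_R_null_modification[OF A]) auto
  moreover have "D \<inter> (\<Omega> \<inter> (\<lambda>\<omega>. X (enn2real (R \<omega>)) \<omega>) -` {..<a})
      = D \<inter> (\<lambda>\<omega>. X (enn2real (R \<omega>)) \<omega>) -` {..<a}" using D_sub by blast
  ultimately show ?thesis by simp
qed

lemma adapted_at_R_borel_trace:
  fixes X :: "real \<Rightarrow> 'a \<Rightarrow> real"
  assumes "adapted \<Omega> G X" "\<forall>\<omega>\<in>\<Omega>. cadlag (\<lambda>t. X t \<omega>)" and B: "B \<in> sets borel"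
  shows "D \<inter> (\<lambda>\<omega>. X (enn2real (R \<omega>)) \<omega>) -` B \<in> trace_on D NF_R"
  using NF_R_sa D_sub _ B[unfolded sets_borel_Iio]
proof (rule trace_preimage_sigma_sets)
  fix C :: "real set" assume "C \<in> range lessThan"
  then show "D \<inter> (\<lambda>\<omega>. X (enn2real (R \<omega>)) \<omega>) -` C \<in> trace_on D NF_R"
    using adapted_at_R_trace[OF assms(1,2)] by blast
qed simp

lemma optional_at_R_trace:
  assumes U: "U \<in> optional_sigma \<Omega> G"
  shows "D \<inter> (\<lambda>\<omega>. (enn2real (R \<omega>), \<omega>)) -` U \<in> trace_on D NF_R"
  using NF_R_sa D_sub _ U[unfolded optional_sigma_def]
proof (rule trace_preimage_sigma_sets)
  fix C assume "C \<in> {{(t, \<omega>) \<in> {0..} \<times> \<Omega>. X t \<omega> \<in> B} | X B.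
      adapted \<Omega> G X \<and> (\<forall>\<omega>\<in>\<Omega>. cadlag (\<lambda>t. X t \<omega>)) \<and> B \<in> sets (borel :: real measure)}"
  then obtain X B where C: "C = {(t, \<omega>) \<in> {0..} \<times> \<Omega>. X t \<omega> \<in> B}"
    and XB: "adapted \<Omega> G X" "\<forall>\<omega>\<in>\<Omega>. cadlag (\<lambda>t. X t \<omega>)" "B \<in> sets borel" by blast
  have "D \<inter> (\<lambda>\<omega>. (enn2real (R \<omega>), \<omega>)) -` C = D \<inter> (\<lambda>\<omega>. X (enn2real (R \<omega>)) \<omega>) -` B"
    unfolding C using D_sub by auto
  then show "D \<inter> (\<lambda>\<omega>. (enn2real (R \<omega>), \<omega>)) -` C \<in> trace_on D NF_R"
    using adapted_at_R_borel_trace[OF XB] by simp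
qed (use D_sub in auto)

lemma trace_sigma_at_G_subset:
  "trace_on D (sigma_at \<Omega> G R) \<subseteq> trace_on D NF_R"
  unfolding sigma_at_def
proof (rule trace_sigma_sets_subset[OF NF_R_sa D_sub])
  fix C assume "C \<in> {{\<omega>\<in>\<Omega>. (if R \<omega> < \<infinity> then Y (enn2real (R \<omega>)) \<omega> else 0) \<in> B} | Y B.
      optional_process \<Omega> G Y \<and> B \<in> sets (borel :: real measure)}"
  then obtain Y B where C: "C = {\<omega>\<in>\<Omega>. (if R \<omega> < \<infinity> then Y (enn2real (R \<omega>)) \<omega> else 0) \<in> B}"
    and YB: "optional_process \<Omega> G Y" "B \<in> sets borel" by blast
  have U: "{(t, \<omega>) \<in> {0..} \<times> \<Omega>. Y t \<omega> \<in> B} \<in> optional_sigma \<Omega> G"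
    using YB unfolding optional_process_def by blast
  have "D \<inter> C = D \<inter> (\<lambda>\<omega>. (enn2real (R \<omega>), \<omega>)) -` {(t, \<omega>) \<in> {0..} \<times> \<Omega>. Y t \<omega> \<in> B}"
    unfolding C using D_sub D_finite by auto
  then show "D \<inter> C \<in> trace_on D NF_R" using optional_at_R_trace[OF U] by (simp only:)
qed

(* Second inclusion: F_R \<subseteq> G_R, and each C \<in> N agrees on D with the value at R of the
   G-optional process 1_C. *)
lemma trace_NF_R_subset:
  "trace_on D NF_R \<subseteq> trace_on D (sigma_at \<Omega> G R)"
  unfolding NF_R_def sjoin_def
proof (rule trace_sigma_sets_subset[OF _ D_sub])
  show "sigma_algebra \<Omega> (sigma_at \<Omega> G R)"
    unfolding sigma_at_def by (rule sigma_algebra_sigma_sets) blast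
next
  fix C assume "C \<in> nullsigma Q Tinf \<union> sigma_at \<Omega> F R"
  then show "D \<inter> C \<in> trace_on D (sigma_at \<Omega> G R)"
  proof
    assume C: "C \<in> nullsigma Q Tinf"
    have "{\<omega>\<in>\<Omega>. \<omega> \<in> C} = C" using C nullsigma_Pow by blast
    then have "{\<omega>\<in>\<Omega>. \<omega> \<in> C \<and> 0 \<le> ennreal t} \<in> G t" for t
      using C nullsigma_sub_G by auto
    then have "{\<omega>\<in>\<Omega>. R \<omega> < \<infinity> \<and> \<omega> \<in> C \<and> 0 \<le> R \<omega>} \<in> sigma_at \<Omega> G R"
      by (intro step_process_sigma_at[where S = "\<lambda>_. 0"] G_sa)
    moreover have "D \<inter> C = D \<inter> {\<omega>\<in>\<Omega>. R \<omega> < \<infinity> \<and> \<omega> \<in> C \<and> 0 \<le> R \<omega>}"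
      using D_sub D_finite by auto
    ultimately show ?thesis by (rule trace_onI)
  next
    assume "C \<in> sigma_at \<Omega> F R"
    then show ?thesis using sigma_at_F_sub_G unfolding trace_on_def by blast
  qed
qed

end

(* The theorem: D \<inter> G_R = D \<inter> (N \<or> F_R). *)
theorem mainTheorem10:
  fixes Q :: "'a measure" and F :: "real \<Rightarrow> 'a set set"
    and \<tau> :: "'a \<Rightarrow> ennreal" and R :: "'a \<Rightarrow> ennreal"
  assumes "prob_space Q"
    and "is_filtration Q F"
    and "right_continuous_filtration F"
    and "nullsigma Q (Finf (space Q) F) \<subseteq> F 0"
    and "\<tau> \<in> borel_measurable Q"
    and "is_stopping_time (space Q) (Gfilt Q F \<tau>) R"
  shows "trace_on {\<omega>\<in>space Q. R \<omega> < \<tau> \<omega>} (sigma_at (space Q) (Gfilt Q F \<tau>) R)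
       = trace_on {\<omega>\<in>space Q. R \<omega> < \<tau> \<omega>}
           (sjoin (space Q)
              (nullsigma Q (sjoin (space Q) (sigma_rv (space Q) \<tau>) (Finf (space Q) F)))
              (sigma_at (space Q) F R))"
proof -
  interpret enlargement_stopping Q F \<tau> R
    using assms by (intro enlargement_stopping.intro enlargement.intro filtered_space.intro
      enlargement_axioms.intro enlargement_stopping_axioms.intro)
  have "trace_on D (sigma_at \<Omega> G R) = trace_on D NF_R"
    using trace_sigma_at_G_subset trace_NF_R_subset by (rule antisym)
  then show ?thesis unfolding D_def NF_R_def Tinf_def .
qed

end
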